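(* Let $k\ge1$, $1\le r\le 4k^2$, $\mathcal{B}=\mathcal{B}(2k,2k;r)$ and $G=D_4$. Then the number of equivalence classes of $\mathcal{B}$ under $G$ is \[|\mathcal{O}_G(\mathcal{B})|=\frac18\left(\binom{4k^2}{r}+2\binom{k^2}{\frac r4}+3\binom{2k^2}{\frac r2}+2\sum_{t=0}^{r}\binom{2k}{t}\binom{k(2k-1)}{\frac{r-t}{2}}\right).\]
   Context: $\mathcal{B}(2k,2k;r)$ is the set of all subsets of exactly $r$ cells ("boards" with $r$ blocked cells) of a $2k\times 2k$ grid. The dihedral group $D_4$ of the 8 symmetries of the square (four rotations about the center and reflections across the horizontal midline, vertical midline and both diagonals) acts on boards; $\mathcal{O}_G(\mathcal{B})$ is the set of orbits (equivalence classes). Convention: a binomial coefficient $\binom{a}{b}$ is $0$ when $b$ is not a nonnegative integer or $b>a$. *)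

theory Defs
  imports Complex_Main
begin

definition cells :: "nat \<Rightarrow> (nat \<times> nat) set" where
  "cells k = {0..<2*k} \<times> {0..<2*k}"

definition boards :: "nat \<Rightarrow> nat \<Rightarrow> (nat \<times> nat) set set" where
  "boards k r = {B. B \<subseteq> cells k \<and> card B = r}"

definition D4 :: "nat \<Rightarrow> ((nat \<times> nat) \<Rightarrow> (nat \<times> nat)) set" where
  "D4 k = (let m = 2*k - 1 in
     { (\<lambda>(i,j). (i, j)),
       (\<lambda>(i,j). (j, m - i)),
       (\<lambda>(i,j). (m - i, m - j)),
       (\<lambda>(i,j). (m - j, i)),
       (\<lambda>(i,j). (m - i, j)),
       (\<lambda>(i,j). (i, m - j)),
       (\<lambda>(i,j). (j, i)),
       (\<lambda>(i,j). (m - j, m - i)) })"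

definition orbit :: "nat \<Rightarrow> (nat \<times> nat) set \<Rightarrow> (nat \<times> nat) set set" where
  "orbit k B = {g ` B | g. g \<in> D4 k}"

definition orbits :: "nat \<Rightarrow> nat \<Rightarrow> (nat \<times> nat) set set set" where
  "orbits k r = orbit k ` boards k r"

definition gbin :: "nat \<Rightarrow> real \<Rightarrow> real" where
  "gbin a b = (if b \<in> \<int> \<and> b \<ge> 0 then real (a choose nat \<lfloor>b\<rfloor>) else 0)"

end

theory Submission
  imports "HOL-Combinatorics.Orbits" "HOL-Algebra.Group_Action" "HOL-Library.Disjoint_Sets" Defs
begin

(* Burnside's lemma: the number of orbits is the average over the eight symmetries g of the
   number of boards fixed by g.  A board is fixed by g iff it is a union of cycles of g acting
   on the cells.  The identity fixes all C(4k^2, r) boards.  The two quarter turns have only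
   4-cycles, k^2 of them; the half turn and the two midline reflections have only 2-cycles,
   2k^2 of them (the side 2k is even, so no cell is fixed).  A diagonal reflection fixes the
   2k cells of its diagonal and swaps the remaining cells in k(2k-1) pairs, so it fixes
   sum_t C(2k, t) C(k(2k-1), (r-t)/2) boards. *)

(* Defs is imported last so that the unqualified names orbit and orbits denote its constants
   rather than those of Orbits and Group_Action. *)

section \<open>Unions of blocks of a partition\<close>

lemma card_weighted_pairs_of_subsets:
  assumes "finite X" "finite Y" "0 < L"
  shows "card {(A, A'). A \<subseteq> X \<and> A' \<subseteq> Y \<and> card A + L * card A' = r} =
    (\<Sum>t=0..r. (card X choose t) * (if L dvd (r - t) then card Y choose ((r - t) div L) else 0))"
proof -
  have "{(A, A'). A \<subseteq> X \<and> A' \<subseteq> Y \<and> card A + L * card A' = r} =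
      (\<Union>t\<in>{0..r}. {A. A \<subseteq> X \<and> card A = t} \<times> {A'. A' \<subseteq> Y \<and> L * card A' = r - t})"
    by auto
  also have "card \<dots> = (\<Sum>t=0..r. card {A. A \<subseteq> X \<and> card A = t} * card {A'. A' \<subseteq> Y \<and> L * card A' = r - t})"
    by (subst card_UN_disjoint) (auto simp: assms card_cartesian_product)
  also have "\<dots> = (\<Sum>t=0..r. (card X choose t) * (if L dvd (r - t) then card Y choose ((r - t) div L) else 0))"
  proof (intro sum.cong refl)
    fix t
    have "{A'. A' \<subseteq> Y \<and> L * card A' = r - t} =
        (if L dvd (r - t) then {A'. A' \<subseteq> Y \<and> card A' = (r - t) div L} else {})"
      using assms(3) by (auto simp: dvd_def) metis
    then show "card {A. A \<subseteq> X \<and> card A = t} * card {A'. A' \<subseteq> Y \<and> L * card A' = r - t} =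
        (card X choose t) * (if L dvd (r - t) then card Y choose ((r - t) div L) else 0)"
      by (simp add: n_subsets assms)
  qed
  finally show ?thesis .
qed

lemma card_Union_blocks:
  assumes "partition_on C P" "finite C" "1 < L" "\<And>Q. Q \<in> P \<Longrightarrow> card Q = 1 \<or> card Q = L"
    and "S \<subseteq> P"
  shows "card (\<Union>S) = card {Q \<in> S. card Q = 1} + L * card {Q \<in> S. card Q = L}"
proof -
  have C: "C = \<Union>P"
    using partition_onD1[OF assms(1)] .
  have fin: "finite S" "\<And>Q. Q \<in> S \<Longrightarrow> finite Q"
    using assms(2,5) finite_elements[OF assms(2,1)] unfolding C
    by (auto intro: finite_subset)
  have "card (\<Union>S) = (\<Sum>Q\<in>S. card Q)"
    using partition_onD2[OF assms(1)] assms(5) fin by (intro card_Union_disjoint) (auto intro: pairwise_subset)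
  also have "\<dots> = (\<Sum>Q\<in>{Q \<in> S. card Q = 1}. card Q) + (\<Sum>Q\<in>{Q \<in> S. card Q = L}. card Q)"
    using fin(1) assms(3,4,5) by (subst sum.union_disjoint[symmetric]) (auto intro!: sum.cong)
  finally show ?thesis by simp
qed

lemma card_unions_of_blocks:
  assumes "partition_on C P" "finite C" "1 < L" "\<And>Q. Q \<in> P \<Longrightarrow> card Q = 1 \<or> card Q = L"
  shows "card {S. S \<subseteq> P \<and> card (\<Union>S) = r} =
    (\<Sum>t=0..r. (card {Q \<in> P. card Q = 1} choose t) *
      (if L dvd (r - t) then card {Q \<in> P. card Q = L} choose ((r - t) div L) else 0))"
proof -
  let ?P1 = "{Q \<in> P. card Q = 1}" and ?PL = "{Q \<in> P. card Q = L}"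
  have finP: "finite P"
    using finite_elements[OF assms(2,1)] .
  have card_Union_Un: "card (\<Union>(A \<union> A')) = card A + L * card A'" if A: "A \<subseteq> ?P1" "A' \<subseteq> ?PL" for A A'
  proof -
    have "{Q \<in> A \<union> A'. card Q = 1} = A" "{Q \<in> A \<union> A'. card Q = L} = A'"
      using A assms(3) by auto
    with A card_Union_blocks[OF assms, of "A \<union> A'"] show ?thesis
      by auto
  qed
  have "bij_betw (\<lambda>S. ({Q \<in> S. card Q = 1}, {Q \<in> S. card Q = L}))
      {S. S \<subseteq> P \<and> card (\<Union>S) = r} {(A, A'). A \<subseteq> ?P1 \<and> A' \<subseteq> ?PL \<and> card A + L * card A' = r}"
  proof (rule bij_betw_byWitness[where f' = "\<lambda>(A, A'). A \<union> A'"])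
    show "\<forall>S\<in>{S. S \<subseteq> P \<and> card (\<Union>S) = r}. (\<lambda>(A, A'). A \<union> A') ({Q \<in> S. card Q = 1}, {Q \<in> S. card Q = L}) = S"
      using assms(4) by auto
    show "\<forall>AA\<in>{(A, A'). A \<subseteq> ?P1 \<and> A' \<subseteq> ?PL \<and> card A + L * card A' = r}.
        (\<lambda>S. ({Q \<in> S. card Q = 1}, {Q \<in> S. card Q = L})) ((\<lambda>(A, A'). A \<union> A') AA) = AA"
      using assms(3) by auto
    show "(\<lambda>S. ({Q \<in> S. card Q = 1}, {Q \<in> S. card Q = L})) ` {S. S \<subseteq> P \<and> card (\<Union>S) = r}
        \<subseteq> {(A, A'). A \<subseteq> ?P1 \<and> A' \<subseteq> ?PL \<and> card A + L * card A' = r}"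
      using card_Union_blocks[OF assms] by auto
    show "(\<lambda>(A, A'). A \<union> A') ` {(A, A'). A \<subseteq> ?P1 \<and> A' \<subseteq> ?PL \<and> card A + L * card A' = r}
        \<subseteq> {S. S \<subseteq> P \<and> card (\<Union>S) = r}"
      using card_Union_Un by auto
  qed
  then show ?thesis
    using card_weighted_pairs_of_subsets[of ?P1 ?PL L r] finP assms(3)
    by (simp add: bij_betw_same_card)
qed

lemma inj_on_Union_Pow_partition:
  assumes "partition_on C P"
  shows "inj_on Union (Pow P)"
proof -
  have "S \<subseteq> S'" if S: "S \<subseteq> P" "S' \<subseteq> P" "\<Union>S = \<Union>S'" for S S'
  proof
    fix Q assume "Q \<in> S"
    obtain x where "x \<in> Q"
      using \<open>Q \<in> S\<close> S(1) partition_onD3[OF assms] by (metis ex_in_conv subsetD)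
    then obtain Q' where "Q' \<in> S'" "x \<in> Q'"
      using \<open>Q \<in> S\<close> S(3) by (metis UnionE UnionI)
    have "Q = Q'"
    proof (rule ccontr)
      assume "Q \<noteq> Q'"
      then have "disjnt Q Q'"
        using partition_onD2[OF assms] \<open>Q \<in> S\<close> \<open>Q' \<in> S'\<close> S by (meson pairwiseD subsetD)
      with \<open>x \<in> Q\<close> \<open>x \<in> Q'\<close> show False by (simp add: disjnt_iff)
    qed
    with \<open>Q' \<in> S'\<close> show "Q \<in> S'" by simp
  qed
  then show ?thesis
    by (intro inj_onI subset_antisym) simp_all
qed

section \<open>Subsets invariant under a permutation\<close>

lemma self_in_orbit_permutes:
  assumes "f permutes C" "finite C"
  shows "x \<in> Orbits.orbit f x"
proof -
  have "permutation f"
    using assms permutation_permutes by blast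
  then show ?thesis by (rule permutation_self_in_orbit)
qed

lemma partition_on_orbits:
  assumes "f permutes C" "finite C"
  shows "partition_on C (Orbits.orbit f ` C)"
proof (rule partition_onI)
  show "\<Union>(Orbits.orbit f ` C) = C"
    using self_in_orbit_permutes[OF assms] permutes_orbit_subset[OF assms(1)] by blast
  show "disjnt Q Q'" if "Q \<in> Orbits.orbit f ` C" "Q' \<in> Orbits.orbit f ` C" "Q \<noteq> Q'" for Q Q'
  proof (unfold disjnt_def, rule equals0I)
    fix z assume "z \<in> Q \<inter> Q'"
    with that have "Q = Orbits.orbit f z" "Q' = Orbits.orbit f z"
      using orbit_cyclic_eq3[OF cyclic_on_orbit[OF assms]] by auto
    with that show False by simp
  qed
  show "{} \<notin> Orbits.orbit f ` C"
    using orbit_nonempty by (metis imageE)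
qed

lemma image_orbit_permutes:
  assumes "f permutes C" "finite C"
  shows "f ` Orbits.orbit f x = Orbits.orbit f x"
proof
  show "f ` Orbits.orbit f x \<subseteq> Orbits.orbit f x"
    by (auto intro: orbit.step)
  show "Orbits.orbit f x \<subseteq> f ` Orbits.orbit f x"
  proof
    fix y assume y: "y \<in> Orbits.orbit f x"
    obtain z where "y = f z"
      using permutes_surj[OF assms(1)] by (metis surjD)
    then show "y \<in> f ` Orbits.orbit f x"
      using y cyclic_on_f_in[OF assms(1) cyclic_on_orbit[OF assms]] by blast
  qed
qed

lemma orbit_subset_invariant:
  assumes "f ` B \<subseteq> B" "x \<in> B"
  shows "Orbits.orbit f x \<subseteq> B"
proof
  fix y assume "y \<in> Orbits.orbit f x"
  then show "y \<in> B"
  proof induction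
    case base
    then show ?case using assms by blast
  next
    case (step y)
    then show ?case using assms(1) by blast
  qed
qed

lemma bij_betw_Union_invariant_subsets:
  assumes "f permutes C" "finite C"
  shows "bij_betw Union (Pow (Orbits.orbit f ` C)) {B. B \<subseteq> C \<and> f ` B = B}"
proof (rule bij_betw_imageI)
  have P: "partition_on C (Orbits.orbit f ` C)"
    using partition_on_orbits[OF assms] .
  show "inj_on Union (Pow (Orbits.orbit f ` C))"
    using inj_on_Union_Pow_partition[OF P] .
  show "Union ` Pow (Orbits.orbit f ` C) = {B. B \<subseteq> C \<and> f ` B = B}"
  proof (intro equalityI subsetI)
    fix B assume "B \<in> Union ` Pow (Orbits.orbit f ` C)"
    then obtain S where S: "S \<subseteq> Orbits.orbit f ` C" "B = \<Union>S"
      by blast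
    have "f ` Q = Q" if Q: "Q \<in> S" for Q
    proof -
      obtain x where "Q = Orbits.orbit f x"
        using Q S(1) by blast
      then show ?thesis
        using image_orbit_permutes[OF assms] by simp
    qed
    then have "(`) f ` S = (\<lambda>Q. Q) ` S"
      by (rule image_cong[OF refl])
    have "f ` \<Union>S = \<Union>((`) f ` S)"
      by (rule image_Union)
    also have "(`) f ` S = (\<lambda>Q. Q) ` S"
      by fact
    finally have "f ` B = B"
      using S(2) by simp
    moreover have "B \<subseteq> C"
      using Union_mono[OF S(1)] partition_onD1[OF P] S(2) by simp
    ultimately show "B \<in> {B. B \<subseteq> C \<and> f ` B = B}"
      by simp
  next
    fix B assume "B \<in> {B. B \<subseteq> C \<and> f ` B = B}"
    then have B: "B \<subseteq> C" "f ` B = B"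
      by auto
    have "\<Union>(Orbits.orbit f ` B) \<subseteq> B"
      using orbit_subset_invariant[of f B] B(2) by (simp add: UN_least)
    moreover have "B \<subseteq> \<Union>(Orbits.orbit f ` B)"
      using self_in_orbit_permutes[OF assms] by blast
    ultimately have "B = \<Union>(Orbits.orbit f ` B)"
      by (rule subset_antisym[rotated])
    with B(1) show "B \<in> Union ` Pow (Orbits.orbit f ` C)"
      by blast
  qed
qed

lemma card_orbit_least_period:
  assumes "(f ^^ L) x = x" "0 < L" "\<And>j. 0 < j \<Longrightarrow> j < L \<Longrightarrow> (f ^^ j) x \<noteq> x"
  shows "card (Orbits.orbit f x) = L"
proof -
  have eq: "i = j" if "j < L" "i \<le> j" "(f ^^ i) x = (f ^^ j) x" for i j
  proof (rule ccontr)
    assume "i \<noteq> j"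
    have "x = (f ^^ (L - j + j)) x"
      using assms(1) that(1) by simp
    also have "\<dots> = (f ^^ (L - j)) ((f ^^ i) x)"
      using that(3) by (simp only: funpow_add o_apply)
    also have "\<dots> = (f ^^ (L - j + i)) x"
      by (simp only: funpow_add o_apply)
    finally have "(f ^^ (L - j + i)) x = x" ..
    moreover have "0 < L - j + i" "L - j + i < L"
      using that \<open>i \<noteq> j\<close> by auto
    then have "(f ^^ (L - j + i)) x \<noteq> x"
      by (rule assms(3))
    ultimately show False
      by contradiction
  qed
  have "inj_on (\<lambda>m. (f ^^ m) x) {..<L}"
  proof (rule inj_onI)
    fix i j assume "i \<in> {..<L}" "j \<in> {..<L}" "(f ^^ i) x = (f ^^ j) x"
    then show "i = j"
      using eq[of j i] eq[of i j] by (metis le_cases lessThan_iff)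
  qed
  moreover have "Orbits.orbit f x = (\<lambda>m. (f ^^ m) x) ` {..<L}"
    using orbit_altdef_bounded[OF assms(1,2)] by auto
  ultimately show ?thesis
    by (simp add: card_image)
qed

lemma card_orbit_fixed_or_period:
  assumes "1 < L" "(f ^^ L) x = x" "\<And>j. 0 < j \<Longrightarrow> j < L \<Longrightarrow> (f ^^ j) x = x \<Longrightarrow> f x = x"
  shows "card (Orbits.orbit f x) = (if f x = x then 1 else L)"
proof (cases "f x = x")
  case True
  then show ?thesis
    by (simp add: orbit_eq_singleton_iff[THEN iffD2])
next
  case False
  with assms have "card (Orbits.orbit f x) = L"
    by (intro card_orbit_least_period) auto
  with False show ?thesis
    by simp
qed

lemma card_invariant_subsets_eq_card_unions_of_orbits:
  assumes "f permutes C" "finite C"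
  shows "card {B. B \<subseteq> C \<and> f ` B = B \<and> card B = r} =
    card {S. S \<subseteq> Orbits.orbit f ` C \<and> card (\<Union>S) = r}"
proof -
  let ?P = "Orbits.orbit f ` C"
  have bij: "bij_betw Union (Pow ?P) {B. B \<subseteq> C \<and> f ` B = B}"
    using bij_betw_Union_invariant_subsets[OF assms] .
  then have "Union ` Pow ?P = {B. B \<subseteq> C \<and> f ` B = B}"
    by (simp add: bij_betw_def)
  then have "{B. B \<subseteq> C \<and> f ` B = B \<and> card B = r} = {B \<in> Union ` Pow ?P. card B = r}"
    by simp
  also have "\<dots> = Union ` {S. S \<subseteq> ?P \<and> card (\<Union>S) = r}"
    by auto
  finally have "{B. B \<subseteq> C \<and> f ` B = B \<and> card B = r} = Union ` {S. S \<subseteq> ?P \<and> card (\<Union>S) = r}" .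
  moreover have "inj_on Union {S. S \<subseteq> ?P \<and> card (\<Union>S) = r}"
    using bij by (auto simp: bij_betw_def intro: inj_on_subset)
  ultimately show ?thesis
    by (simp add: card_image)
qed

lemma card_invariant_subsets:
  assumes perm: "f permutes C" and fin: "finite C" and "1 < L"
    and period: "\<And>x. x \<in> C \<Longrightarrow> (f ^^ L) x = x"
    and least_period: "\<And>x j. x \<in> C \<Longrightarrow> 0 < j \<Longrightarrow> j < L \<Longrightarrow> (f ^^ j) x = x \<Longrightarrow> f x = x"
  shows "card {B. B \<subseteq> C \<and> f ` B = B \<and> card B = r} =
    (\<Sum>t=0..r. (card {x \<in> C. f x = x} choose t) *
      (if L dvd (r - t) then ((card C - card {x \<in> C. f x = x}) div L) choose ((r - t) div L) else 0))"
proof -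
  define P where "P = Orbits.orbit f ` C"
  define D where "D = {x \<in> C. f x = x}"
  have part: "partition_on C P"
    unfolding P_def using partition_on_orbits[OF perm fin] .
  have card_orbit: "card (Orbits.orbit f x) = (if f x = x then 1 else L)" if "x \<in> C" for x
    using card_orbit_fixed_or_period[OF \<open>1 < L\<close> period[OF that] least_period[OF that]] .
  then have sizes: "card Q = 1 \<or> card Q = L" if "Q \<in> P" for Q
    using that unfolding P_def by auto
  have "{Q \<in> P. card Q = 1} = (\<lambda>x. {x}) ` D"
  proof (intro equalityI subsetI)
    fix Q assume "Q \<in> {Q \<in> P. card Q = 1}"
    then obtain x where x: "x \<in> C" "Q = Orbits.orbit f x" "card Q = 1"
      unfolding P_def by blast
    with card_orbit[OF x(1)] \<open>1 < L\<close> have "f x = x"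
      by (cases "f x = x") simp_all
    moreover from this x(2) have "Q = {x}"
      by (simp add: orbit_eq_singleton_iff)
    ultimately show "Q \<in> (\<lambda>x. {x}) ` D"
      unfolding D_def using x(1) by blast
  next
    fix Q assume "Q \<in> (\<lambda>x. {x}) ` D"
    then obtain x where "x \<in> C" "Orbits.orbit f x = Q" "card Q = 1"
      unfolding D_def by (auto simp: orbit_eq_singleton_iff)
    then show "Q \<in> {Q \<in> P. card Q = 1}"
      unfolding P_def by blast
  qed
  then have card_P1: "card {Q \<in> P. card Q = 1} = card D"
    by (simp add: card_image)
  have "card C = card D + L * card {Q \<in> P. card Q = L}"
    using card_Union_blocks[OF part fin \<open>1 < L\<close> sizes order_refl] partition_onD1[OF part] card_P1
    by simp
  then have card_PL: "card {Q \<in> P. card Q = L} = (card C - card D) div L"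
    using \<open>1 < L\<close> by simp
  show ?thesis
    using card_invariant_subsets_eq_card_unions_of_orbits[OF perm fin, of r]
      card_unions_of_blocks[OF part fin \<open>1 < L\<close> sizes, of r]
    unfolding P_def[symmetric] card_P1 card_PL D_def[symmetric] by (rule trans)
qed

lemma card_invariant_subsets_fixpoint_free:
  assumes "f permutes C" "finite C" "1 < L" "\<And>x. x \<in> C \<Longrightarrow> (f ^^ L) x = x"
    and moves: "\<And>x j. x \<in> C \<Longrightarrow> 0 < j \<Longrightarrow> j < L \<Longrightarrow> (f ^^ j) x \<noteq> x"
  shows "card {B. B \<subseteq> C \<and> f ` B = B \<and> card B = r} =
    (if L dvd r then (card C div L) choose (r div L) else 0)"
proof -
  have "{x \<in> C. f x = x} = {}"
    using moves[of _ 1] \<open>1 < L\<close> by auto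
  then have no_fixed_points: "card {x \<in> C. f x = x} = 0"
    by (simp only: card.empty)
  have least_period: "f x = x" if "x \<in> C" "0 < j" "j < L" "(f ^^ j) x = x" for x j
    using moves that by blast
  define g where "g t = (if L dvd (r - t) then (card C div L) choose ((r - t) div L) else 0)" for t
  have "card {B. B \<subseteq> C \<and> f ` B = B \<and> card B = r} = (\<Sum>t=0..r. (0 choose t) * g t)"
    using card_invariant_subsets[OF assms(1-4) least_period]
    unfolding no_fixed_points diff_zero g_def .
  also have "\<dots> = (\<Sum>t=0..r. if t = 0 then g 0 else 0)"
    by (intro sum.cong refl) (simp add: binomial_eq_0)
  finally show ?thesis
    by (simp add: g_def)
qed

section \<open>The dihedral group acting on the grid\<close>

lemma finite_cells: "finite (cells k)"
  by (simp add: cells_def)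

lemma cellsE:
  assumes "x \<in> cells k"
  obtains i j where "x = (i, j)" "i < 2 * k" "j < 2 * k"
  using assms by (cases x) (auto simp: cells_def)

lemma card_cells: "card (cells k) = 4 * k^2"
  by (simp add: cells_def card_cartesian_product power2_eq_square)

lemma finite_boards: "finite (boards k r)"
  by (rule finite_subset[of _ "Pow (cells k)"]) (auto simp: boards_def finite_cells)

(* (s, p, q) transposes the grid if s, then reflects the row index if p and the column index if q. *)
type_synonym d4 = "bool \<times> bool \<times> bool"

definition reflect :: "nat \<Rightarrow> bool \<Rightarrow> nat \<Rightarrow> nat" where
  "reflect k b i = (if b then 2 * k - 1 - i else i)"

fun d4_map :: "nat \<Rightarrow> d4 \<Rightarrow> nat \<times> nat \<Rightarrow> nat \<times> nat" where
  "d4_map k (s, p, q) (i, j) = (reflect k p (if s then j else i), reflect k q (if s then i else j))"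

(* Off the grid d4_map is not injective (truncated subtraction), so d4_act leaves those points
   fixed; this makes every symmetry a permutation of nat \<times> nat. *)
definition d4_act :: "nat \<Rightarrow> d4 \<Rightarrow> nat \<times> nat \<Rightarrow> nat \<times> nat" where
  "d4_act k u x = (if x \<in> cells k then d4_map k u x else x)"

fun d4_mult :: "d4 \<Rightarrow> d4 \<Rightarrow> d4" where
  "d4_mult (s, p, q) (s', p', q') = (s \<noteq> s', p \<noteq> (if s then q' else p'), q \<noteq> (if s then p' else q'))"

fun d4_inv :: "d4 \<Rightarrow> d4" where
  "d4_inv (s, p, q) = (if s then (s, q, p) else (s, p, q))"

definition D4_group :: "d4 monoid" where
  "D4_group = \<lparr>carrier = UNIV, mult = d4_mult, one = (False, False, False)\<rparr>"

lemma group_D4_group: "group D4_group"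
proof (rule groupI)
  show "x \<otimes>\<^bsub>D4_group\<^esub> y \<otimes>\<^bsub>D4_group\<^esub> z = x \<otimes>\<^bsub>D4_group\<^esub> (y \<otimes>\<^bsub>D4_group\<^esub> z)" for x y z
    by (cases x rule: prod_cases3; cases y rule: prod_cases3; cases z rule: prod_cases3)
      (auto simp: D4_group_def)
  show "\<exists>y \<in> carrier D4_group. y \<otimes>\<^bsub>D4_group\<^esub> x = \<one>\<^bsub>D4_group\<^esub>" for x
    by (cases x rule: prod_cases3) (auto simp: D4_group_def intro: exI[of _ "d4_inv x"])
qed (auto simp: D4_group_def)

lemma reflect_less: "i < 2 * k \<Longrightarrow> reflect k b i < 2 * k"
  by (simp add: reflect_def)

lemma reflect_reflect: "i < 2 * k \<Longrightarrow> reflect k b (reflect k b i) = i"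
  by (simp add: reflect_def)

lemma reflect_False [simp]: "reflect k False i = i"
  by (simp add: reflect_def)

lemma reflect_True_neq: "i < 2 * k \<Longrightarrow> reflect k True i \<noteq> i"
  by (simp add: reflect_def) presburger

lemma d4_map_cells: "x \<in> cells k \<Longrightarrow> d4_map k u x \<in> cells k"
  by (cases x; cases u rule: prod_cases3) (auto simp: cells_def reflect_less)

lemma d4_act_cell:
  "i < 2 * k \<Longrightarrow> j < 2 * k \<Longrightarrow>
    d4_act k (s, p, q) (i, j) = (reflect k p (if s then j else i), reflect k q (if s then i else j))"
  by (simp add: d4_act_def cells_def)

lemma d4_act_mult: "d4_act k (d4_mult u v) x = d4_act k u (d4_act k v x)"
proof (cases "x \<in> cells k")
  case True
  then obtain i j where x: "x = (i, j)" "i < 2 * k" "j < 2 * k"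
    by (rule cellsE)
  show ?thesis
    using x reflect_less
    by (cases u rule: prod_cases3; cases v rule: prod_cases3) (auto simp: d4_act_cell reflect_def)
qed (simp add: d4_act_def)

lemma d4_act_one: "d4_act k (False, False, False) x = x"
  by (cases x) (simp add: d4_act_def reflect_def)

lemma d4_act_cells: "x \<in> cells k \<Longrightarrow> d4_act k u x \<in> cells k"
  by (simp add: d4_act_def d4_map_cells)

lemma d4_act_inv:
  "d4_act k (d4_inv u) (d4_act k u x) = x" "d4_act k u (d4_act k (d4_inv u) x) = x"
proof -
  have "d4_mult (d4_inv u) u = (False, False, False)" "d4_mult u (d4_inv u) = (False, False, False)"
    by (cases u rule: prod_cases3; auto)+
  then show "d4_act k (d4_inv u) (d4_act k u x) = x" "d4_act k u (d4_act k (d4_inv u) x) = x"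
    by (metis d4_act_mult d4_act_one)+
qed

lemma d4_act_permutes: "d4_act k u permutes cells k"
proof (rule bij_imp_permutes)
  show "bij_betw (d4_act k u) (cells k) (cells k)"
    by (intro bij_betw_byWitness[where f' = "d4_act k (d4_inv u)"])
      (simp_all add: d4_act_inv d4_act_cells image_subset_iff)
qed (simp add: d4_act_def)

lemma d4_act_image_boards:
  assumes "B \<in> boards k r"
  shows "d4_act k u ` B \<in> boards k r"
proof -
  have "d4_act k u ` B \<subseteq> cells k"
    using assms d4_act_cells by (fastforce simp: boards_def)
  moreover have "card (d4_act k u ` B) = card B"
    using permutes_inj_on[OF d4_act_permutes] by (rule card_image)
  ultimately show ?thesis
    using assms by (simp add: boards_def)
qed

definition board_action :: "nat \<Rightarrow> nat \<Rightarrow> d4 \<Rightarrow> (nat \<times> nat) set \<Rightarrow> (nat \<times> nat) set" where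
  "board_action k r u = (\<lambda>B \<in> boards k r. d4_act k u ` B)"

lemma group_action_boards: "group_action D4_group (boards k r) (board_action k r)"
proof -
  have Bij: "board_action k r u \<in> Bij (boards k r)" for u
    unfolding Bij_def board_action_def
    by (auto intro!: bij_betw_byWitness[where f' = "(`) (d4_act k (d4_inv u))"]
        simp: d4_act_image_boards image_image d4_act_inv)
  have "board_action k r (d4_mult u v) = compose (boards k r) (board_action k r u) (board_action k r v)"
    for u v
  proof
    fix B
    show "board_action k r (d4_mult u v) B = compose (boards k r) (board_action k r u) (board_action k r v) B"
      by (cases "B \<in> boards k r")
        (simp_all add: board_action_def compose_def image_image d4_act_mult d4_act_image_boards)
  qed
  then have "board_action k r \<in> hom D4_group (BijGroup (boards k r))"
    using Bij by (intro homI) (simp_all add: BijGroup_def D4_group_def)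
  then show ?thesis
    unfolding group_action_def group_hom_def group_hom_axioms_def
    using group_D4_group group_BijGroup by blast
qed

lemma UNIV_d4:
  "(UNIV :: d4 set) = {(False, False, False), (True, False, True), (False, True, True), (True, True, False),
    (False, True, False), (False, False, True), (True, False, False), (True, True, True)}"
  by auto

lemma range_d4_map: "range (d4_map k) = D4 k"
proof -
  have d4_map_elements:
    "d4_map k (False, False, False) = (\<lambda>(i, j). (i, j))"
    "d4_map k (True, False, True) = (\<lambda>(i, j). (j, 2 * k - 1 - i))"
    "d4_map k (False, True, True) = (\<lambda>(i, j). (2 * k - 1 - i, 2 * k - 1 - j))"
    "d4_map k (True, True, False) = (\<lambda>(i, j). (2 * k - 1 - j, i))"
    "d4_map k (False, True, False) = (\<lambda>(i, j). (2 * k - 1 - i, j))"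
    "d4_map k (False, False, True) = (\<lambda>(i, j). (i, 2 * k - 1 - j))"
    "d4_map k (True, False, False) = (\<lambda>(i, j). (j, i))"
    "d4_map k (True, True, True) = (\<lambda>(i, j). (2 * k - 1 - j, 2 * k - 1 - i))"
    by (auto simp: fun_eq_iff reflect_def)
  show ?thesis
    unfolding D4_def Let_def UNIV_d4 image_insert image_empty d4_map_elements by (rule refl)
qed

lemma orbit_eq_range_d4_act:
  assumes "B \<subseteq> cells k"
  shows "orbit k B = range (\<lambda>u. d4_act k u ` B)"
proof -
  have "d4_act k u ` B = d4_map k u ` B" for u
    using assms by (intro image_cong) (auto simp: d4_act_def)
  then show ?thesis
    unfolding orbit_def range_d4_map[symmetric] by auto
qed

lemma card_orbits_Burnside:
  "real (card (orbits k r)) = 1 / 8 * (\<Sum>u\<in>UNIV. real (card {B \<in> boards k r. d4_act k u ` B = B}))"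
proof -
  interpret group_action D4_group "boards k r" "board_action k r"
    by (rule group_action_boards)
  have "Group_Action.orbit D4_group (board_action k r) B = orbit k B" if "B \<in> boards k r" for B
    using that by (auto simp: Group_Action.orbit_def D4_group_def board_action_def orbit_eq_range_d4_act boards_def)
  then have "Group_Action.orbits D4_group (boards k r) (board_action k r) = orbits k r"
    by (auto simp: Group_Action.orbits_def Defs.orbits_def)
  moreover have "order D4_group = 8"
    by (simp add: order_def D4_group_def UNIV_d4)
  moreover have "invariants (boards k r) (board_action k r) u = {B \<in> boards k r. d4_act k u ` B = B}" for u
    by (auto simp: invariants_def board_action_def)
  ultimately have "card (orbits k r) * 8 = (\<Sum>u\<in>UNIV. card {B \<in> boards k r. d4_act k u ` B = B})"
    using burnside finite_boards by (simp add: D4_group_def)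
  then have "real (card (orbits k r) * 8) = real (\<Sum>u\<in>UNIV. card {B \<in> boards k r. d4_act k u ` B = B})"
    by (rule arg_cong)
  then show ?thesis
    by (simp add: of_nat_sum)
qed

section \<open>Boards fixed by each symmetry\<close>

lemma funpow_2: "(f ^^ 2) x = f (f x)"
  by (simp add: numeral_eq_Suc)

lemma gbin_of_nat_divide:
  assumes "0 < L"
  shows "gbin a (real n / real L) = (if L dvd n then real (a choose (n div L)) else 0)"
proof (cases "L dvd n")
  case True
  then obtain q where "n = L * q" ..
  with assms show ?thesis by (simp add: gbin_def)
next
  case False
  have "real n / real L \<notin> \<int>"
  proof
    assume "real n / real L \<in> \<int>"
    then obtain z where "real n / real L = of_int z"
      by (auto elim: Ints_cases)
    with assms have "int n = int L * z"
      by (simp add: field_simps) (metis of_int_eq_iff of_int_mult of_int_of_nat_eq)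
    with False show False
      by (metis dvd_triv_left int_dvd_int_iff)
  qed
  with False show ?thesis by (simp add: gbin_def)
qed

lemma fixed_boards_eq: "{B \<in> boards k r. f ` B = B} = {B. B \<subseteq> cells k \<and> f ` B = B \<and> card B = r}"
  by (auto simp: boards_def)

lemma card_boards_fixed_by_identity:
  "card {B \<in> boards k r. d4_act k (False, False, False) ` B = B} = 4 * k^2 choose r"
  by (simp add: d4_act_one boards_def n_subsets finite_cells card_cells)

lemma quarter_turn_twice:
  assumes "p \<noteq> q" "i < 2 * k" "j < 2 * k"
  shows "(d4_act k (True, p, q) ^^ 2) (i, j) = (reflect k True i, reflect k True j)"
  using assms reflect_less by (auto simp: funpow_2 d4_act_cell reflect_def)

lemma quarter_turn_period:
  assumes "p \<noteq> q" "x \<in> cells k"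
  shows "(d4_act k (True, p, q) ^^ 4) x = x"
proof -
  let ?f = "d4_act k (True, p, q)"
  obtain i j where x: "x = (i, j)" "i < 2 * k" "j < 2 * k"
    using assms(2) by (rule cellsE)
  have "(?f ^^ 4) x = (?f ^^ (2 + 2)) x"
    by simp
  also have "\<dots> = (?f ^^ 2) ((?f ^^ 2) x)"
    by (simp only: funpow_add o_apply)
  also have "\<dots> = x"
    using x assms(1) by (simp add: quarter_turn_twice reflect_less reflect_reflect)
  finally show ?thesis .
qed

lemma quarter_turn_moves:
  assumes "p \<noteq> q" "x \<in> cells k" "0 < j" "j < 4"
  shows "(d4_act k (True, p, q) ^^ j) x \<noteq> x"
proof -
  let ?f = "d4_act k (True, p, q)"
  obtain i i' where x: "x = (i, i')" "i < 2 * k" "i' < 2 * k"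
    using assms(2) by (rule cellsE)
  have no_fixed_point: "?f x \<noteq> x"
    using x assms(1) reflect_True_neq[of i k] by (cases p) (auto simp: d4_act_cell)
  consider "j = 1" | "j = 2" | "j = 3"
    using assms(3,4) by linarith
  then show ?thesis
  proof cases
    case 1
    then show ?thesis using no_fixed_point by simp
  next
    case 2
    then show ?thesis
      using x assms(1) reflect_True_neq[of i k] by (simp add: quarter_turn_twice)
  next
    case 3
    have "?f ((?f ^^ 3) x) = x"
      using quarter_turn_period[OF assms(1,2)] by (simp add: numeral_eq_Suc)
    then show ?thesis
      using 3 no_fixed_point by auto
  qed
qed

lemma card_boards_fixed_by_quarter_turn:
  assumes "p \<noteq> q"
  shows "real (card {B \<in> boards k r. d4_act k (True, p, q) ` B = B}) = gbin (k^2) (real r / 4)"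
  unfolding fixed_boards_eq
  using card_invariant_subsets_fixpoint_free[OF d4_act_permutes finite_cells _
      quarter_turn_period[OF assms] quarter_turn_moves[OF assms]]
    gbin_of_nat_divide[of 4 "k^2" r]
  by (simp add: card_cells)

lemma card_boards_fixed_by_half_turn_or_midline_reflection:
  assumes "p \<or> q"
  shows "real (card {B \<in> boards k r. d4_act k (False, p, q) ` B = B}) = gbin (2 * k^2) (real r / 2)"
proof -
  let ?f = "d4_act k (False, p, q)"
  have period: "(?f ^^ 2) x = x" if "x \<in> cells k" for x
    using that by (auto simp: cells_def funpow_2 d4_act_cell reflect_less reflect_reflect)
  have moves: "(?f ^^ j) x \<noteq> x" if "x \<in> cells k" "0 < j" "j < 2" for x j
  proof -
    have "j = 1" using that(2,3) by simp
    then show ?thesis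
      using that(1) assms reflect_True_neq by (auto simp: cells_def d4_act_cell reflect_def)
  qed
  show ?thesis
    unfolding fixed_boards_eq
    using card_invariant_subsets_fixpoint_free[OF d4_act_permutes finite_cells _ period moves]
      gbin_of_nat_divide[of 2 "2 * k^2" r]
    by (simp add: card_cells)
qed

lemma card_boards_fixed_by_diagonal_reflection:
  "real (card {B \<in> boards k r. d4_act k (True, p, p) ` B = B}) =
    (\<Sum>t=0..r. real (2 * k choose t) * gbin (k * (2 * k - 1)) ((real r - real t) / 2))"
proof -
  let ?f = "d4_act k (True, p, p)"
  have period: "(?f ^^ 2) x = x" if "x \<in> cells k" for x
    using that by (auto simp: cells_def funpow_2 d4_act_cell reflect_less reflect_reflect)
  have least_period: "?f x = x" if "x \<in> cells k" "0 < j" "j < 2" "(?f ^^ j) x = x" for x j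
  proof -
    have "j = 1" using that(2,3) by simp
    with that(4) show ?thesis by simp
  qed
  have "{x \<in> cells k. ?f x = x} = (\<lambda>i. (i, reflect k p i)) ` {..<2 * k}"
    by (auto simp: cells_def d4_act_cell reflect_less reflect_reflect)
  then have card_diagonal: "card {x \<in> cells k. ?f x = x} = 2 * k"
    by (simp add: card_image inj_on_def)
  have off_diagonal: "(card (cells k) - 2 * k) div 2 = k * (2 * k - 1)"
    by (simp add: card_cells power2_eq_square algebra_simps diff_mult_distrib2)
  have "card {B \<in> boards k r. ?f ` B = B} =
      (\<Sum>t=0..r. (2 * k choose t) * (if 2 dvd (r - t) then k * (2 * k - 1) choose ((r - t) div 2) else 0))"
    using card_invariant_subsets[OF d4_act_permutes finite_cells _ period least_period]
    unfolding fixed_boards_eq card_diagonal off_diagonal by simp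
  moreover have "gbin (k * (2 * k - 1)) ((real r - real t) / 2) =
      real (if 2 dvd (r - t) then k * (2 * k - 1) choose ((r - t) div 2) else 0)" if "t \<in> {0..r}" for t
    using that gbin_of_nat_divide[of 2 "k * (2 * k - 1)" "r - t"] by (simp add: of_nat_diff)
  ultimately show ?thesis
    by simp
qed

theorem proposition5p1:
  fixes k r :: nat
  assumes "k \<ge> 1" and "1 \<le> r" and "r \<le> 4*k^2"
  shows "real (card (orbits k r)) =
    (1/8) * ( real (4*k^2 choose r)
            + 2 * gbin (k^2) (real r / 4)
            + 3 * gbin (2*k^2) (real r / 2)
            + 2 * (\<Sum>t=0..r. real (2*k choose t) * gbin (k*(2*k-1)) ((real r - real t) / 2)))"
proof -
  have "real (card (orbits k r)) = 1 / 8 * (\<Sum>u\<in>UNIV. real (card {B \<in> boards k r. d4_act k u ` B = B}))"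
    by (rule card_orbits_Burnside)
  also have "\<dots> = 1 / 8 * (real (4*k^2 choose r) + 2 * gbin (k^2) (real r / 4) + 3 * gbin (2*k^2) (real r / 2)
      + 2 * (\<Sum>t=0..r. real (2*k choose t) * gbin (k*(2*k-1)) ((real r - real t) / 2)))"
    by (simp add: UNIV_d4 card_boards_fixed_by_identity card_boards_fixed_by_quarter_turn
        card_boards_fixed_by_half_turn_or_midline_reflection card_boards_fixed_by_diagonal_reflection)
  finally show ?thesis .
qed

end
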